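(* Let $C_1,\dots,C_M$ be linear codes of length $n$ over $\mathbb{F}_q$, let $A=(a_{i,j})$ be an $M\times N$ ($M\le N$) upper triangular matrix that is nonsingular by columns, let $C=[C_1,\dots,C_M]\cdot A$, let $1\le b\le n$, and set $d^*=\min\{(N-i+1)d_b(C_i)\mid i=1,\dots,M\}$. Then: (a) $d_b(C)\le\min\{N d_b(C_1),\,(N-i+1)d_b(C_i)+b-1 \mid i=2,\dots,M\}$. (b) If $d^*=N d_b(C_1)$, then $d_b(C)=d^*$. (c) Let $2\le i_0\le M$ satisfy $(N-i_0+1)d_b(C_{i_0})=d^*$. If there exist a codeword $\mathbf{c}_{i_0}\in C_{i_0}$ with $w_b(\mathbf{c}_{i_0})=d_b(C_{i_0})$ and a hole $H\in\mathbb{H}(\chi_1(\mathbf{c}_{i_0}))$ with $|H|\ge b-1$ and $\{1,n\}\cap H\ne\emptyset$, then $d_b(C)=d^*$.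
   Context: For a vector of length $L$, indices are cyclic mod $L$; $\chi_b(\mathbf{x})=\{i\in\{1,\dots,L\}:(x_i,\dots,x_{i+b-1})\ne\mathbf{0}\}$ (indices mod $L$), $w_b(\mathbf{x})=|\chi_b(\mathbf{x})|$, and for a linear code $C$, $d_b(C)=\min_{\mathbf{0}\ne\mathbf{c}\in C}w_b(\mathbf{c})$. For $J\subseteq\mathbb{Z}_n=\{1,\dots,n\}$, a hole of $J$ of size $h\ge1$ is a set $H=\{a+1,\dots,a+h\}\subseteq\mathbb{Z}_n\setminus J$ (indices mod $n$) with $a,a+h+1\in J$; $\mathbb{H}(J)$ is the set of holes of $J$. Matrix product code: $[C_1,\dots,C_M]\cdot A=\{[\sum_\ell a_{\ell,1}\mathbf{c}_\ell,\dots,\sum_\ell a_{\ell,N}\mathbf{c}_\ell] : \mathbf{c}_\ell\in C_\ell\}\subseteq\mathbb{F}_q^{nN}$. $A$ is upper triangular if $a_{i,j}=0$ for $i>j$. $A$ is nonsingular by columns (NSC) if for all $1\le t\le M$ and $1\le j_1<\dots<j_t\le N$ the $t\times t$ submatrix formed by the first $t$ rows and columns $j_1,\dots,j_t$ is nonsingular. *)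

theory Defs
  imports "Jordan_Normal_Form.Determinant"
begin

(* Vectors of length L over a field are lists of length L; positions are 1-based,
   position i is stored at list index i-1.  Indices are cyclic mod L. *)

definition lin_code :: "nat \<Rightarrow> 'a::field list set \<Rightarrow> bool" where
  "lin_code n C \<longleftrightarrow> C \<subseteq> {x. length x = n} \<and> replicate n 0 \<in> C \<and>
     (\<forall>x\<in>C. \<forall>y\<in>C. map2 (+) x y \<in> C) \<and> (\<forall>s. \<forall>x\<in>C. map ((*) s) x \<in> C)"

definition is_zero_vec :: "'a::zero list \<Rightarrow> bool" where
  "is_zero_vec x \<longleftrightarrow> (\<forall>v\<in>set x. v = 0)"

definition chi :: "nat \<Rightarrow> 'a::zero list \<Rightarrow> nat set" where
  "chi b x = {i\<in>{1..length x}. \<exists>j<b. x ! ((i - 1 + j) mod length x) \<noteq> 0}"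

definition wb :: "nat \<Rightarrow> 'a::zero list \<Rightarrow> nat" where
  "wb b x = card (chi b x)"

definition db :: "nat \<Rightarrow> 'a::zero list set \<Rightarrow> nat" where
  "db b C = Inf {wb b c | c. c \<in> C \<and> \<not> is_zero_vec c}"

definition cyc :: "nat \<Rightarrow> nat \<Rightarrow> nat" where
  "cyc n i = ((i - 1) mod n) + 1"

definition holes :: "nat \<Rightarrow> nat set \<Rightarrow> nat set set" where
  "holes n J = {H. \<exists>a h. a \<in> {1..n} \<and> h \<ge> 1 \<and> H = {cyc n (a + k) | k. 1 \<le> k \<and> k \<le> h} \<and>
      H \<subseteq> {1..n} - J \<and> cyc n a \<in> J \<and> cyc n (a + h + 1) \<in> J}"

definition mpc :: "nat \<Rightarrow> nat \<Rightarrow> nat \<Rightarrow> (nat \<Rightarrow> 'a::field list set) \<Rightarrow> (nat \<Rightarrow> nat \<Rightarrow> 'a) \<Rightarrow> 'a list set" where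
  "mpc n M N Cs A = {concat (map (\<lambda>j. map (\<lambda>k. \<Sum>l=1..M. A l j * (c l ! k)) [0..<n]) [1..<N+1]) | c.
      \<forall>l\<in>{1..M}. c l \<in> Cs l}"

definition upper_tri :: "nat \<Rightarrow> nat \<Rightarrow> (nat \<Rightarrow> nat \<Rightarrow> 'a::zero) \<Rightarrow> bool" where
  "upper_tri M N A \<longleftrightarrow> (\<forall>i\<in>{1..M}. \<forall>j\<in>{1..N}. i > j \<longrightarrow> A i j = 0)"

definition NSC :: "nat \<Rightarrow> nat \<Rightarrow> (nat \<Rightarrow> nat \<Rightarrow> 'a::field) \<Rightarrow> bool" where
  "NSC M N A \<longleftrightarrow> (\<forall>t\<in>{1..M}. \<forall>js :: nat \<Rightarrow> nat.
      strict_mono_on {..<t} js \<and> js ` {..<t} \<subseteq> {1..N} \<longrightarrow>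
      det (mat t t (\<lambda>(r, s). A (r + 1) (js s))) \<noteq> 0)"

end

theory Submission
  imports Defs "HOL-Number_Theory.Cong"
begin

(* A nonzero codeword of [C_1,...,C_M] . A comes from a tuple (c_1,...,c_M) whose last nonzero
   component is some c_s.  Nonsingularity by columns makes every nonzero entry of c_s reappear in
   at least N - s + 1 of the N blocks, so every nonzero b-window of c_s is seen by at least N - s + 1
   windows of the codeword: w_b >= (N - s + 1) d_b(C_s) >= d*.
   Conversely, put a minimum-weight c_i alone into slot i.  Upper triangularity leaves only blocks
   i,...,N nonzero, so each nonzero window of c_i is seen at most N - i + 1 times, plus once more
   if it wraps around the end of c_i with nonzero entries on both sides.  There are at most b - 1
   such windows, and none when a zero run of length >= b - 1 passes through position 1 or n. *)

lemma NSC_card_nonzero_columns: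
  fixes A :: "nat \<Rightarrow> nat \<Rightarrow> 'a::field"
  assumes nsc: "NSC M N A" and s: "1 \<le> s" "s \<le> M" and MN: "M \<le> N"
    and vs: "v s \<noteq> 0" and vz: "\<And>l. s < l \<Longrightarrow> l \<le> M \<Longrightarrow> v l = 0"
  shows "N - s + 1 \<le> card {j\<in>{1..N}. (\<Sum>l=1..M. A l j * v l) \<noteq> 0}"
proof (rule ccontr)
  let ?K = "{j\<in>{1..N}. (\<Sum>l=1..M. A l j * v l) \<noteq> 0}"
  let ?Z = "{j\<in>{1..N}. (\<Sum>l=1..M. A l j * v l) = 0}"
  assume "\<not> ?thesis"
  moreover have Z_eq: "?Z = {1..N} - ?K" by auto
  have "card ?Z = N - card ?K" unfolding Z_eq by (subst card_Diff_subset) auto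
  ultimately have cZ: "s \<le> card ?Z" using s MN by linarith
  define js where "js = (\<lambda>k. sorted_list_of_set ?Z ! k)"
  have js_mono: "strict_mono_on {..<s} js"
    using cZ sorted_wrt_nth_less[OF strict_sorted_list_of_set[of ?Z]]
    by (intro strict_mono_onI) (auto simp: js_def)
  have js_Z: "js k \<in> ?Z" if "k < s" for k
    using that cZ nth_mem[of k "sorted_list_of_set ?Z"] by (simp add: js_def)
  \<comment> \<open>the transpose of the minor on rows 1..s and columns js kills (v 1, ..., v s)\<close>
  define B where "B = mat s s (\<lambda>(k, r). A (r + 1) (js k))"
  define w where "w = vec s (\<lambda>r. v (r + 1))"
  have B: "B \<in> carrier_mat s s" unfolding B_def by simp
  have "det (mat s s (\<lambda>(r, k). A (r + 1) (js k))) \<noteq> 0"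
    using nsc s js_mono js_Z unfolding NSC_def by fastforce
  moreover have "B = transpose_mat (mat s s (\<lambda>(r, k). A (r + 1) (js k)))"
    unfolding B_def by (auto simp: transpose_mat_def)
  ultimately have detB: "det B \<noteq> 0"
    using det_transpose[of "mat s s (\<lambda>(r, k). A (r + 1) (js k))" s] by simp
  have w: "w \<in> carrier_vec s" "w \<noteq> 0\<^sub>v s"
    using s vs unfolding w_def by (auto simp: vec_eq_iff intro!: exI[of _ "s - 1"])
  have "B *\<^sub>v w = 0\<^sub>v s"
  proof (rule eq_vecI)
    fix k assume "k < dim_vec (0\<^sub>v s :: 'a vec)"
    hence k: "k < s" by simp
    have "(B *\<^sub>v w) $ k = (\<Sum>r<s. A (r + 1) (js k) * v (r + 1))"
      using k unfolding B_def w_def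
      by (simp add: mult_mat_vec_def scalar_prod_def row_def lessThan_atLeast0)
    also have "\<dots> = (\<Sum>l=1..s. A l (js k) * v l)"
      by (simp add: sum.atLeast1_atMost_eq)
    also have "\<dots> = (\<Sum>l=1..M. A l (js k) * v l)"
      by (rule sum.mono_neutral_left) (use s vz in auto)
    also have "\<dots> = 0" using js_Z[OF k] by simp
    finally show "(B *\<^sub>v w) $ k = 0\<^sub>v s $ k" using k by simp
  qed (use B in simp)
  hence "det B = 0" using det_0_iff_vec_prod_zero_field[OF B] w by auto
  with detB show False by simp
qed

lemma length_concat_equal_length:
  assumes "\<And>j. j < N \<Longrightarrow> length (f j) = n"
  shows "length (concat (map f [0..<N])) = N * n"
proof -
  have lengths: "map (length \<circ> f) [0..<N] = map (\<lambda>_. n) [0..<N]" using assms by simp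
  show ?thesis unfolding length_concat map_map lengths by (simp add: sum_list_triv)
qed

lemma nth_concat_equal_length:
  assumes "\<And>j. j < N \<Longrightarrow> length (f j) = n" "j < N" "k < n"
  shows "concat (map f [0..<N]) ! (j * n + k) = f j ! k"
  using assms
proof (induction N)
  case (Suc N)
  have len: "length (concat (map f [0..<N])) = N * n"
    using Suc.prems(1) by (intro length_concat_equal_length) simp
  show ?case
  proof (cases "j < N")
    case True
    then have "j * n + k < N * n" using Suc.prems(3) mult_le_mono1[of "Suc j" N n] by simp
    with True Suc show ?thesis by (simp add: nth_append len)
  next
    case False
    with Suc.prems have "j = N" by simp
    then show ?thesis by (simp add: nth_append len)
  qed
qed simp

definition mp_word :: "nat \<Rightarrow> nat \<Rightarrow> nat \<Rightarrow> (nat \<Rightarrow> nat \<Rightarrow> 'a::field) \<Rightarrow> (nat \<Rightarrow> 'a list) \<Rightarrow> 'a list" where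
  "mp_word n M N A c = concat (map (\<lambda>j. map (\<lambda>k. \<Sum>l=1..M. A l j * (c l ! k)) [0..<n]) [1..<N+1])"

lemma mpc_conv_mp_word: "mpc n M N Cs A = {mp_word n M N A c | c. \<forall>l\<in>{1..M}. c l \<in> Cs l}"
  unfolding mpc_def mp_word_def ..

lemma mp_word_shift:
  "mp_word n M N A c = concat (map (\<lambda>j. map (\<lambda>k. \<Sum>l=1..M. A l (Suc j) * (c l ! k)) [0..<n]) [0..<N])"
  unfolding mp_word_def by (simp add: map_Suc_upt[symmetric] comp_def del: upt_Suc)

lemma length_mp_word: "length (mp_word n M N A c) = N * n"
  unfolding mp_word_shift by (rule length_concat_equal_length) simp

lemma nth_mod_mp_word:
  assumes "0 < n" "0 < N"
  shows "mp_word n M N A c ! (g mod (N * n)) = (\<Sum>l=1..M. A l (g div n mod N + 1) * (c l ! (g mod n)))"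
proof -
  have "g mod (N * n) = (g div n mod N) * n + g mod n"
    using mod_mult2_eq[of g n N] by (simp add: mult.commute)
  then show ?thesis
    unfolding mp_word_shift using assms by (simp add: nth_concat_equal_length)
qed

lemma wb_conv_card: "wb b x = card {p. p < length x \<and> (\<exists>t<b. x ! ((p + t) mod length x) \<noteq> 0)}"
proof -
  have "chi b x = Suc ` {p. p < length x \<and> (\<exists>t<b. x ! ((p + t) mod length x) \<noteq> 0)}"
    unfolding chi_def by (force simp: image_iff Suc_le_eq gr0_conv_Suc)
  then show ?thesis unfolding wb_def by (simp add: card_image)
qed

lemma card_less_mult_conv_sum:
  fixes n N :: nat
  assumes "0 < n"
  shows "card {g. g < N * n \<and> Q g} = (\<Sum>p<n. card {j. j < N \<and> Q (j * n + p)})"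
proof -
  have "bij_betw (\<lambda>(p, j). j * n + p) (SIGMA p:{..<n}. {j. j < N \<and> Q (j * n + p)}) {g. g < N * n \<and> Q g}"
  proof (rule bij_betw_byWitness[where f' = "\<lambda>g. (g mod n, g div n)"])
    show "(\<lambda>(p, j). j * n + p) ` (SIGMA p:{..<n}. {j. j < N \<and> Q (j * n + p)}) \<subseteq> {g. g < N * n \<and> Q g}"
    proof clarsimp
      fix p j assume "p < n" "j < N"
      then show "j * n + p < N * n" using mult_le_mono1[of "Suc j" N n] by simp
    qed
    show "(\<lambda>g. (g mod n, g div n)) ` {g. g < N * n \<and> Q g} \<subseteq> (SIGMA p:{..<n}. {j. j < N \<and> Q (j * n + p)})"
      using assms by (auto simp: less_mult_imp_div_less mult.commute)
    show "\<forall>x\<in>SIGMA p:{..<n}. {j. j < N \<and> Q (j * n + p)}. (\<lambda>g. (g mod n, g div n)) ((\<lambda>(p, j). j * n + p) x) = x"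
      by auto
    show "\<forall>g\<in>{g. g < N * n \<and> Q g}. (\<lambda>(p, j). j * n + p) (g mod n, g div n) = g"
      by (simp add: mult.commute)
  qed
  then have "card {g. g < N * n \<and> Q g} = card (SIGMA p:{..<n}. {j. j < N \<and> Q (j * n + p)})"
    by (simp add: bij_betw_same_card)
  also have "\<dots> = (\<Sum>p<n. card {j. j < N \<and> Q (j * n + p)})" by (rule card_SigmaI) auto
  finally show ?thesis .
qed

lemma wb_mp_word:
  assumes "0 < n" "0 < N"
  shows "wb b (mp_word n M N A c) = (\<Sum>p<n. card {j. j < N \<and>
           (\<exists>t<b. (\<Sum>l=1..M. A l ((j + (p + t) div n) mod N + 1) * (c l ! ((p + t) mod n))) \<noteq> 0)})"
proof -
  have "\<And>j p t. (j * n + p + t) div n = j + (p + t) div n"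
       "\<And>j p t. (j * n + p + t) mod n = (p + t) mod n"
    using assms by (simp_all add: add.assoc)
  then show ?thesis
    unfolding wb_conv_card length_mp_word nth_mod_mp_word[OF assms]
    by (simp add: card_less_mult_conv_sum[OF assms(1)])
qed

lemma bij_betw_shift_mod:
  fixes N d :: nat
  assumes "0 < N"
  shows "bij_betw (\<lambda>j. (j + d) mod N + 1) {..<N} {1..N}"
proof -
  have inj: "inj_on (\<lambda>j. (j + d) mod N + 1) {..<N}"
  proof (rule inj_onI)
    fix j j' :: nat
    assume "j \<in> {..<N}" "j' \<in> {..<N}" "(j + d) mod N + 1 = (j' + d) mod N + 1"
    then have "[j + d = j' + d] (mod N)" "j < N" "j' < N" by (simp_all add: cong_def)
    then show "j = j'" by (simp add: cong_add_rcancel_nat cong_less_modulus_unique_nat)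
  qed
  moreover have "(\<lambda>j. (j + d) mod N + 1) ` {..<N} = {1..N}"
    by (rule card_subset_eq) (use assms card_image[OF inj] in \<open>auto simp: Suc_le_eq\<close>)
  ultimately show ?thesis by (simp add: bij_betw_def)
qed

lemma card_shift_mod_preimage:
  fixes N d :: nat
  assumes "0 < N" "K \<subseteq> {1..N}"
  shows "card {j. j < N \<and> (j + d) mod N + 1 \<in> K} = card K"
proof -
  have "bij_betw (\<lambda>j. (j + d) mod N + 1) {j \<in> {..<N}. (j + d) mod N + 1 \<in> K} {k \<in> {1..N}. k \<in> K}"
    by (rule bij_betw_Collect[OF bij_betw_shift_mod[OF assms(1)]]) simp
  moreover have "{k \<in> {1..N}. k \<in> K} = K" using assms(2) by blast
  ultimately show ?thesis by (simp add: bij_betw_same_card)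
qed

lemma wb_mp_word_ge:
  fixes A :: "nat \<Rightarrow> nat \<Rightarrow> 'a::field" and c :: "nat \<Rightarrow> 'a list"
  assumes nsc: "NSC M N A" and MN: "M \<le> N" and s: "1 \<le> s" "s \<le> M" and n: "0 < n"
    and len: "\<And>l. l \<in> {1..M} \<Longrightarrow> length (c l) = n"
    and zero_above: "\<And>l. s < l \<Longrightarrow> l \<le> M \<Longrightarrow> is_zero_vec (c l)"
  shows "(N - s + 1) * wb b (c s) \<le> wb b (mp_word n M N A c)"
proof -
  have N: "0 < N" using s MN by simp
  define J where "J p = {j. j < N \<and> (\<exists>t<b.
    (\<Sum>l=1..M. A l ((j + (p + t) div n) mod N + 1) * (c l ! ((p + t) mod n))) \<noteq> 0)}" for p
  define P where "P = {p. p < n \<and> (\<exists>t<b. c s ! ((p + t) mod n) \<noteq> 0)}"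
  have "N - s + 1 \<le> card (J p)" if p: "p \<in> P" for p
  proof -
    obtain t where t: "t < b" and nz: "c s ! ((p + t) mod n) \<noteq> 0" using p unfolding P_def by auto
    define K where "K = {j \<in> {1..N}. (\<Sum>l=1..M. A l j * (c l ! ((p + t) mod n))) \<noteq> 0}"
    have "N - s + 1 \<le> card K" unfolding K_def
    proof (rule NSC_card_nonzero_columns[OF nsc s MN, where v = "\<lambda>l. c l ! ((p + t) mod n)"])
      show "c s ! ((p + t) mod n) \<noteq> 0" by (rule nz)
      fix l assume "s < l" "l \<le> M"
      then show "c l ! ((p + t) mod n) = 0"
        using zero_above[of l] len[of l] s n unfolding is_zero_vec_def by simp
    qed
    also have "card K = card {j. j < N \<and> (j + (p + t) div n) mod N + 1 \<in> K}"
      by (rule card_shift_mod_preimage[symmetric]) (auto simp: K_def N)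
    also have "\<dots> \<le> card (J p)"
      using t by (intro card_mono) (auto simp: J_def K_def)
    finally show ?thesis .
  qed
  then have "(N - s + 1) * card P \<le> (\<Sum>p\<in>P. card (J p))"
    using sum_mono[of P "\<lambda>_. N - s + 1" "\<lambda>p. card (J p)"] by (simp add: mult.commute)
  also have "\<dots> \<le> (\<Sum>p<n. card (J p))" by (rule sum_mono2) (auto simp: P_def)
  finally have "(N - s + 1) * card P \<le> (\<Sum>p<n. card (J p))" .
  moreover have "wb b (c s) = card P" using len[of s] s unfolding wb_conv_card P_def by simp
  moreover have "wb b (mp_word n M N A c) = (\<Sum>p<n. card (J p))" unfolding wb_mp_word[OF n N] J_def ..
  ultimately show ?thesis by simp
qed

lemma chi_zero_vec:
  assumes "is_zero_vec x"
  shows "chi b x = {}"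
proof -
  have zero: "x ! (k mod length x) = 0" if "0 < length x" for k
    using assms that unfolding is_zero_vec_def by simp
  show ?thesis unfolding chi_def
  proof (rule equals0I)
    fix i assume "i \<in> {i \<in> {1..length x}. \<exists>j<b. x ! ((i - 1 + j) mod length x) \<noteq> 0}"
    then obtain j where "1 \<le> i" "i \<le> length x" "x ! ((i - 1 + j) mod length x) \<noteq> 0" by auto
    with zero[of "i - 1 + j"] show False by (cases x) auto
  qed
qed

lemma wb_pos:
  assumes "\<not> is_zero_vec x" "0 < b"
  shows "0 < wb b x"
proof -
  obtain k where k: "k < length x" "x ! k \<noteq> 0"
    using assms(1) unfolding is_zero_vec_def by (auto simp: in_set_conv_nth)
  then have "Suc k \<in> chi b x" using assms(2) unfolding chi_def by auto
  moreover have "finite (chi b x)" unfolding chi_def by simp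
  ultimately show ?thesis unfolding wb_def by (auto simp: card_gt_0_iff)
qed

definition single_tuple :: "nat \<Rightarrow> nat \<Rightarrow> 'a::zero list \<Rightarrow> nat \<Rightarrow> 'a list" where
  "single_tuple n i x l = (if l = i then x else replicate n 0)"

lemma sum_single_tuple:
  fixes A :: "nat \<Rightarrow> nat \<Rightarrow> 'a::field"
  assumes "i \<in> {1..M}" "k < n"
  shows "(\<Sum>l=1..M. A l j * (single_tuple n i x l ! k)) = A i j * x ! k"
proof -
  have "(\<Sum>l=1..M. A l j * (single_tuple n i x l ! k)) = (\<Sum>l\<in>{1..M}. if l = i then A i j * x ! k else 0)"
    using assms(2) by (intro sum.cong) (auto simp: single_tuple_def)
  then show ?thesis using assms(1) by simp
qed

lemma wb_mp_word_single:
  fixes A :: "nat \<Rightarrow> nat \<Rightarrow> 'a::field"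
  assumes "i \<in> {1..M}" "0 < n" "0 < N"
  shows "wb b (mp_word n M N A (single_tuple n i x)) =
    (\<Sum>p\<in>{p. p < n \<and> (\<exists>t<b. x ! ((p + t) mod n) \<noteq> 0)}. card {j. j < N \<and>
       (\<exists>t<b. A i ((j + (p + t) div n) mod N + 1) \<noteq> 0 \<and> x ! ((p + t) mod n) \<noteq> 0)})"
proof -
  have entry: "(\<Sum>l=1..M. A l j * (single_tuple n i x l ! ((p + t) mod n))) = A i j * x ! ((p + t) mod n)"
    for j p t by (rule sum_single_tuple) (use assms in auto)
  have "wb b (mp_word n M N A (single_tuple n i x)) = (\<Sum>p<n. card {j. j < N \<and>
       (\<exists>t<b. A i ((j + (p + t) div n) mod N + 1) \<noteq> 0 \<and> x ! ((p + t) mod n) \<noteq> 0)})"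
    unfolding wb_mp_word[OF assms(2,3)] entry by simp
  also have "\<dots> = (\<Sum>p\<in>{p. p < n \<and> (\<exists>t<b. x ! ((p + t) mod n) \<noteq> 0)}. card {j. j < N \<and>
       (\<exists>t<b. A i ((j + (p + t) div n) mod N + 1) \<noteq> 0 \<and> x ! ((p + t) mod n) \<noteq> 0)})"
    by (rule sum.mono_neutral_right) auto
  finally show ?thesis .
qed

lemma wb_mp_word_single_le_mult:
  fixes A :: "nat \<Rightarrow> nat \<Rightarrow> 'a::field"
  assumes "i \<in> {1..M}" "0 < n" "0 < N" "length x = n"
  shows "wb b (mp_word n M N A (single_tuple n i x)) \<le> N * wb b x"
proof -
  have "card {j. j < N \<and> Q j} \<le> N" for Q
    using card_mono[of "{..<N}" "{j. j < N \<and> Q j}"] by auto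
  then have "wb b (mp_word n M N A (single_tuple n i x)) \<le> (\<Sum>p\<in>{p. p < n \<and> (\<exists>t<b. x ! ((p + t) mod n) \<noteq> 0)}. N)"
    unfolding wb_mp_word_single[OF assms(1-3)] by (intro sum_mono)
  then show ?thesis using assms(4) by (simp add: wb_conv_card mult.commute)
qed

definition straddling_windows :: "nat \<Rightarrow> 'a::zero list \<Rightarrow> nat set" where
  "straddling_windows b x = {p. p < length x \<and> (\<exists>t<b. p + t < length x \<and> x ! (p + t) \<noteq> 0)
     \<and> (\<exists>t<b. length x \<le> p + t \<and> x ! (p + t - length x) \<noteq> 0)}"

lemma card_straddling_windows: "card (straddling_windows b x) \<le> b - 1"
proof -
  have "straddling_windows b x \<subseteq> {length x + 1 - b..<length x}"
    unfolding straddling_windows_def by auto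
  then have "card (straddling_windows b x) \<le> card {length x + 1 - b..<length x}"
    by (intro card_mono) simp_all
  then show ?thesis by simp
qed

lemma wb_mp_word_single_le:
  fixes A :: "nat \<Rightarrow> nat \<Rightarrow> 'a::field"
  assumes ut: "upper_tri M N A" and i: "2 \<le> i" "i \<le> M" and MN: "M \<le> N"
    and b: "b \<le> n" and n: "0 < n" and x: "length x = n"
  shows "wb b (mp_word n M N A (single_tuple n i x)) \<le> (N - i + 1) * wb b x + card (straddling_windows b x)"
proof -
  define W0 where "W0 p \<longleftrightarrow> (\<exists>t<b. p + t < n \<and> x ! (p + t) \<noteq> 0)" for p
  define W1 where "W1 p \<longleftrightarrow> (\<exists>t<b. n \<le> p + t \<and> x ! (p + t - n) \<noteq> 0)" for p
  define P where "P = {p. p < n \<and> (\<exists>t<b. x ! ((p + t) mod n) \<noteq> 0)}"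
  define J where "J p = {j. j < N \<and>
    (\<exists>t<b. A i ((j + (p + t) div n) mod N + 1) \<noteq> 0 \<and> x ! ((p + t) mod n) \<noteq> 0)}" for p
  have N: "0 < N" using i MN by simp
  have wrap: "(p + t) div n = 1" "(p + t) mod n = p + t - n" if "n \<le> p + t" "p < n" "t < b" for p t
    using that b n by (simp_all add: le_div_geq le_mod_geq)
  have window: "(\<exists>t<b. x ! ((p + t) mod n) \<noteq> 0) \<longleftrightarrow> W0 p \<or> W1 p" if p: "p < n" for p
  proof
    assume "\<exists>t<b. x ! ((p + t) mod n) \<noteq> 0"
    then obtain t where "t < b" "x ! ((p + t) mod n) \<noteq> 0" by blast
    then show "W0 p \<or> W1 p"
      using wrap[OF _ p] unfolding W0_def W1_def by (cases "p + t < n") auto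
  next
    assume "W0 p \<or> W1 p"
    then show "\<exists>t<b. x ! ((p + t) mod n) \<noteq> 0"
    proof
      assume "W0 p"
      then obtain t where "t < b" "p + t < n" "x ! (p + t) \<noteq> 0" unfolding W0_def by blast
      then show ?thesis by (intro exI[of _ t]) simp
    next
      assume "W1 p"
      then obtain t where "t < b" "n \<le> p + t" "x ! (p + t - n) \<noteq> 0" unfolding W1_def by blast
      then show ?thesis using wrap[OF _ p] by (intro exI[of _ t]) simp
    qed
  qed
  have P_eq: "P = {p. p < n \<and> (W0 p \<or> W1 p)}" unfolding P_def using window by blast
  have "card (J p) \<le> N - i + 1 + (if W0 p \<and> W1 p then 1 else 0)" if p: "p < n" for p
  proof -
    have above: "i \<le> k" if k: "k \<in> {1..N}" "A i k \<noteq> 0" for k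
    proof (rule ccontr)
      assume "\<not> i \<le> k"
      then have "A i k = 0" using ut i k(1) unfolding upper_tri_def by simp
      with k(2) show False by simp
    qed
    have "J p \<subseteq> (if W0 p then {i - 1..<N} else {}) \<union> (if W1 p then {i - 2..<N - 1} else {})"
    proof
      fix j assume "j \<in> J p"
      then obtain t where j: "j < N" and t: "t < b" and A: "A i ((j + (p + t) div n) mod N + 1) \<noteq> 0"
        and nz: "x ! ((p + t) mod n) \<noteq> 0"
        unfolding J_def by auto
      show "j \<in> (if W0 p then {i - 1..<N} else {}) \<union> (if W1 p then {i - 2..<N - 1} else {})"
      proof (cases "p + t < n")
        case True
        then have "W0 p" using t nz unfolding W0_def by auto
        moreover have "i \<le> j + 1" using above[of "j + 1"] A True j by simp
        ultimately show ?thesis using j by auto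
      next
        case False
        then have "W1 p" using t nz wrap[OF _ p t] unfolding W1_def by auto
        have "j + 1 < N"
        proof (rule ccontr)
          assume "\<not> j + 1 < N"
          then have "j + 1 = N" using j by simp
          then have "(j + (p + t) div n) mod N + 1 = 1" using wrap[OF _ p t] False by simp
          then show False using above[of 1] A i N by simp
        qed
        moreover have "i \<le> j + 2" using above[of "j + 2"] A \<open>j + 1 < N\<close> wrap[OF _ p t] False by simp
        ultimately show ?thesis using \<open>W1 p\<close> by auto
      qed
    qed
    then have "card (J p) \<le> card ((if W0 p then {i - 1..<N} else {}) \<union> (if W1 p then {i - 2..<N - 1} else {}))"
      by (intro card_mono) simp_all
    also have "\<dots> \<le> N - i + 1 + (if W0 p \<and> W1 p then 1 else 0)"
    proof -
      have "{i - 1..<N} \<union> {i - 2..<N - 1} = {i - 2..<N}" using i MN by auto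
      then show ?thesis using i MN by (cases "W0 p"; cases "W1 p") auto
    qed
    finally show ?thesis .
  qed
  then have "(\<Sum>p\<in>P. card (J p)) \<le> (\<Sum>p\<in>P. N - i + 1 + (if W0 p \<and> W1 p then 1 else 0))"
    by (intro sum_mono) (simp add: P_def)
  also have "\<dots> = (\<Sum>p\<in>P. N - i + 1) + (\<Sum>p\<in>P. if W0 p \<and> W1 p then 1 else 0)"
    by (rule sum.distrib)
  also have "\<dots> = (N - i + 1) * card P + card {p \<in> P. W0 p \<and> W1 p}"
    by (simp add: sum.inter_filter[symmetric] P_def)
  also have "{p \<in> P. W0 p \<and> W1 p} = {p. p < n \<and> W0 p \<and> W1 p}" unfolding P_eq by auto
  finally have "(\<Sum>p\<in>P. card (J p)) \<le> (N - i + 1) * card P + card {p. p < n \<and> W0 p \<and> W1 p}" .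
  moreover have "wb b (mp_word n M N A (single_tuple n i x)) = (\<Sum>p\<in>P. card (J p))"
    unfolding P_def J_def by (rule wb_mp_word_single) (use i n N in auto)
  moreover have "wb b x = card P" unfolding wb_conv_card x P_def ..
  ultimately show ?thesis unfolding straddling_windows_def W0_def W1_def x by simp
qed

(* r + length x - q is the cyclic distance from position q forward to position r *)
definition wrap_free :: "nat \<Rightarrow> 'a::zero list \<Rightarrow> bool" where
  "wrap_free b x \<longleftrightarrow> (\<forall>q<length x. \<forall>r<length x. r + length x < q + b \<longrightarrow> x ! q = 0 \<or> x ! r = 0)"

lemma straddling_windows_empty:
  assumes "wrap_free b x" "b \<le> length x"
  shows "straddling_windows b x = {}"
proof (unfold straddling_windows_def, intro equals0I, clarify)
  fix p t0 t1
  assume "p < length x" "t0 < b" "p + t0 < length x" "x ! (p + t0) \<noteq> 0"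
    and "t1 < b" "length x \<le> p + t1" "x ! (p + t1 - length x) \<noteq> 0"
  moreover have "p + t1 - length x < length x" "p + t1 - length x + length x < p + t0 + b"
    using \<open>p < length x\<close> \<open>t1 < b\<close> \<open>length x \<le> p + t1\<close> assms(2) by linarith+
  ultimately show False using assms(1) unfolding wrap_free_def by blast
qed

(* The zero run H passes through the wrap-around point, so it lies strictly between any two nonzero
   entries on opposite sides of that point and keeps them at cyclic distance at least b. *)
lemma wrap_free_if_hole:
  assumes x: "length x = n" and H: "H \<in> holes n (chi 1 x)"
    and long: "b - 1 \<le> card H" and ends: "{1, n} \<inter> H \<noteq> {}"
  shows "wrap_free b x"
proof -
  obtain a h where a: "a \<in> {1..n}" and H_eq: "H = {cyc n (a + k) | k. 1 \<le> k \<and> k \<le> h}"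
    and H_sub: "H \<subseteq> {1..n} - chi 1 x"
    using H unfolding holes_def by blast
  have zero: "x ! ((a + k - 1) mod n) = 0" if "1 \<le> k" "k \<le> h" for k
  proof -
    have "cyc n (a + k) \<in> {1..n} - chi 1 x" using that H_eq H_sub by blast
    moreover have "(cyc n (a + k) - 1) mod n = (a + k - 1) mod n" unfolding cyc_def by simp
    ultimately show ?thesis using x unfolding chi_def by auto
  qed
  have "H = (\<lambda>k. cyc n (a + k)) ` {1..h}" unfolding H_eq by (auto simp: image_def)
  then have "card H \<le> h" using card_image_le[of "{1..h}" "\<lambda>k. cyc n (a + k)"] by simp
  with long have b: "b \<le> h + 1" by linarith
  obtain z where "z \<in> H" "z = 1 \<or> z = n" using ends by blast
  then obtain m0 where m0: "1 \<le> m0" "m0 \<le> h" and "cyc n (a + m0) = 1 \<or> cyc n (a + m0) = n"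
    unfolding H_eq by blast
  then have "(a + m0 - 1) mod n = 0 \<or> (a + m0 - 1) mod n = n - 1" unfolding cyc_def by auto
  then obtain m where m: "n - 1 \<le> m" "m \<le> n" "[m = a + m0 - 1] (mod n)"
  proof
    assume "(a + m0 - 1) mod n = 0"
    then show thesis by (intro that[of n]) (simp_all add: cong_def)
  next
    assume "(a + m0 - 1) mod n = n - 1"
    then show thesis using a by (intro that[of "n - 1"]) (simp_all add: cong_def)
  qed
  \<comment> \<open>read on the line, the run of zeros covers the positions m + 1 - m0, ..., m + h - m0\<close>
  have run: "x ! (j mod n) = 0" if "m < j + m0" "j + m0 \<le> m + h" for j
  proof -
    have "a + (j + m0 - m) - 1 + m = j + (a + m0 - 1)" using that a m0 by linarith
    moreover have "[j + (a + m0 - 1) = j + m] (mod n)" using m(3) by (simp add: cong_add_lcancel_nat cong_sym)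
    ultimately have "[a + (j + m0 - m) - 1 + m = j + m] (mod n)" by (simp only:)
    then have "[a + (j + m0 - m) - 1 = j] (mod n)" by (rule cong_add_rcancel_nat[THEN iffD1])
    then show ?thesis using zero[of "j + m0 - m"] that by (simp add: cong_def)
  qed
  show ?thesis unfolding wrap_free_def x
  proof (intro allI impI)
    fix q r assume q: "q < n" and r: "r < n" and close: "r + n < q + b"
    show "x ! q = 0 \<or> x ! r = 0"
    proof (rule ccontr)
      assume "\<not> (x ! q = 0 \<or> x ! r = 0)"
      then have "x ! (q mod n) \<noteq> 0" "x ! ((r + n) mod n) \<noteq> 0" using q r by simp_all
      then have "\<not> (m < q + m0 \<and> q + m0 \<le> m + h)" "\<not> (m < r + n + m0 \<and> r + n + m0 \<le> m + h)"
        using run by blast+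
      then show False using q m m0 b close by linarith
    qed
  qed
qed

lemma db_le: "c \<in> C \<Longrightarrow> \<not> is_zero_vec c \<Longrightarrow> db b C \<le> wb b c"
  unfolding db_def by (rule cInf_lower) auto

lemma db_attained:
  assumes "\<exists>c\<in>C. \<not> is_zero_vec c"
  shows "\<exists>c\<in>C. \<not> is_zero_vec c \<and> wb b c = db b C"
proof -
  have "{wb b c | c. c \<in> C \<and> \<not> is_zero_vec c} \<noteq> {}" using assms by auto
  then have "db b C \<in> {wb b c | c. c \<in> C \<and> \<not> is_zero_vec c}" unfolding db_def by (rule Inf_nat_def1)
  then show ?thesis by auto
qed

lemma is_zero_vec_mp_word:
  assumes "\<And>l. l \<in> {1..M} \<Longrightarrow> is_zero_vec (c l)" "\<And>l. l \<in> {1..M} \<Longrightarrow> length (c l) = n"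
  shows "is_zero_vec (mp_word n M N A c)"
  using assms unfolding is_zero_vec_def mp_word_def by (auto intro!: sum.neutral)

locale mp_code =
  fixes n M N b :: nat and Cs :: "nat \<Rightarrow> 'a::field list set" and A :: "nat \<Rightarrow> nat \<Rightarrow> 'a"
  assumes codes: "\<forall>i\<in>{1..M}. lin_code n (Cs i)"
    and nontriv: "\<forall>i\<in>{1..M}. \<exists>c\<in>Cs i. \<not> is_zero_vec c"
    and MN: "1 \<le> M" "M \<le> N"
    and ut: "upper_tri M N A"
    and nsc: "NSC M N A"
    and b: "1 \<le> b" "b \<le> n"
begin

lemma n_pos: "0 < n" and N_pos: "0 < N"
  using b MN by simp_all

lemma length_code: "i \<in> {1..M} \<Longrightarrow> c \<in> Cs i \<Longrightarrow> length c = n"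
  using codes unfolding lin_code_def by auto

lemma minimal_codeword: "i \<in> {1..M} \<Longrightarrow> \<exists>x\<in>Cs i. \<not> is_zero_vec x \<and> wb b x = db b (Cs i)"
  using nontriv by (intro db_attained) auto

lemma single_tuple_in_mpc:
  "i \<in> {1..M} \<Longrightarrow> x \<in> Cs i \<Longrightarrow> mp_word n M N A (single_tuple n i x) \<in> mpc n M N Cs A"
  unfolding mpc_conv_mp_word using codes by (auto simp: single_tuple_def lin_code_def)

lemma mp_word_single_nonzero:
  assumes i: "i \<in> {1..M}" and x: "x \<in> Cs i" "\<not> is_zero_vec x"
  shows "\<not> is_zero_vec (mp_word n M N A (single_tuple n i x))"
proof -
  have "0 < (N - i + 1) * wb b x" using wb_pos[OF x(2)] b by simp
  also have "\<dots> \<le> wb b (mp_word n M N A (single_tuple n i x))"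
    using wb_mp_word_ge[OF nsc MN(2) _ _ n_pos, of i "single_tuple n i x" b] i length_code[OF i x(1)]
    by (simp add: single_tuple_def is_zero_vec_def)
  finally show ?thesis using chi_zero_vec unfolding wb_def by fastforce
qed

lemma db_mpc_le_single:
  "i \<in> {1..M} \<Longrightarrow> x \<in> Cs i \<Longrightarrow> \<not> is_zero_vec x \<Longrightarrow>
    db b (mpc n M N Cs A) \<le> wb b (mp_word n M N A (single_tuple n i x))"
  by (intro db_le single_tuple_in_mpc mp_word_single_nonzero)

lemma db_mpc_le_first: "db b (mpc n M N Cs A) \<le> N * db b (Cs 1)"
proof -
  obtain x where x: "x \<in> Cs 1" "\<not> is_zero_vec x" "wb b x = db b (Cs 1)"
    using minimal_codeword MN by auto
  have "wb b (mp_word n M N A (single_tuple n 1 x)) \<le> N * wb b x"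
    using MN by (intro wb_mp_word_single_le_mult n_pos N_pos length_code[of 1 x]) (use x in auto)
  then show ?thesis using db_mpc_le_single[of 1 x] x MN by simp
qed

lemma db_mpc_le_plus:
  assumes "2 \<le> i" "i \<le> M"
  shows "db b (mpc n M N Cs A) \<le> (N - i + 1) * db b (Cs i) + b - 1"
proof -
  have i: "i \<in> {1..M}" using assms by simp
  obtain x where x: "x \<in> Cs i" "\<not> is_zero_vec x" "wb b x = db b (Cs i)"
    using minimal_codeword[OF i] by auto
  have "wb b (mp_word n M N A (single_tuple n i x)) \<le> (N - i + 1) * wb b x + card (straddling_windows b x)"
    by (rule wb_mp_word_single_le[OF ut assms MN(2) b(2) n_pos length_code[OF i x(1)]])
  from this[unfolded x(3)] show ?thesis
    using db_mpc_le_single[OF i x(1,2)] card_straddling_windows[of b x] b(1) by linarith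
qed

lemma db_mpc_le_hole:
  assumes "2 \<le> i" "i \<le> M" and x: "x \<in> Cs i" "wb b x = db b (Cs i)"
    and H: "H \<in> holes n (chi 1 x)" "b - 1 \<le> card H" "{1, n} \<inter> H \<noteq> {}"
  shows "db b (mpc n M N Cs A) \<le> (N - i + 1) * db b (Cs i)"
proof -
  have i: "i \<in> {1..M}" using assms by simp
  have "chi 1 x \<noteq> {}" using H(1) unfolding holes_def by blast
  then have "\<not> is_zero_vec x" using chi_zero_vec by blast
  moreover have "straddling_windows b x = {}"
    using wrap_free_if_hole[OF length_code[OF i x(1)] H] b(2) length_code[OF i x(1)]
    by (intro straddling_windows_empty) simp_all
  then have "wb b (mp_word n M N A (single_tuple n i x)) \<le> (N - i + 1) * wb b x"
    using wb_mp_word_single_le[OF ut assms(1,2) MN(2) b(2) n_pos length_code[OF i x(1)]] by simp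
  ultimately show ?thesis using db_mpc_le_single[OF i x(1)] x(2) by simp
qed

lemma db_mpc_ge: "Min {(N - i + 1) * db b (Cs i) | i. 1 \<le> i \<and> i \<le> M} \<le> db b (mpc n M N Cs A)"
proof -
  have one: "1 \<in> {1..M}" using MN by simp
  with nontriv obtain x where "x \<in> Cs 1" "\<not> is_zero_vec x" by blast
  with one have "\<exists>Y\<in>mpc n M N Cs A. \<not> is_zero_vec Y"
    using mp_word_single_nonzero single_tuple_in_mpc by blast
  then obtain Y where "Y \<in> mpc n M N Cs A" and Y: "\<not> is_zero_vec Y" "wb b Y = db b (mpc n M N Cs A)"
    using db_attained by blast
  then obtain c where c: "\<And>l. l \<in> {1..M} \<Longrightarrow> c l \<in> Cs l" and Y_eq: "Y = mp_word n M N A c"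
    unfolding mpc_conv_mp_word by blast
  have len: "\<And>l. l \<in> {1..M} \<Longrightarrow> length (c l) = n" using c length_code by blast
  define S where "S = {l \<in> {1..M}. \<not> is_zero_vec (c l)}"
  have "S \<noteq> {}"
  proof
    assume "S = {}"
    then have "is_zero_vec Y" unfolding Y_eq S_def by (intro is_zero_vec_mp_word len) auto
    with Y(1) show False by simp
  qed
  moreover have fin: "finite S" unfolding S_def by simp
  ultimately have s: "Max S \<in> S" by simp
  have above: "\<And>l. l \<in> S \<Longrightarrow> l \<le> Max S" using fin by simp
  from s have s_range: "1 \<le> Max S" "Max S \<le> M" unfolding S_def by auto
  have zero_above: "is_zero_vec (c l)" if "Max S < l" "l \<le> M" for l
  proof (rule ccontr)
    assume "\<not> is_zero_vec (c l)"
    with that s_range have "l \<in> S" unfolding S_def by simp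
    with above that(1) show False by fastforce
  qed
  have "Min {(N - i + 1) * db b (Cs i) | i. 1 \<le> i \<and> i \<le> M} \<le> (N - Max S + 1) * db b (Cs (Max S))"
    using s_range by (intro Min_le) auto
  also have "\<dots> \<le> (N - Max S + 1) * wb b (c (Max S))"
    using s c by (intro mult_le_mono2 db_le) (auto simp: S_def)
  also have "\<dots> \<le> wb b Y"
    unfolding Y_eq using s_range zero_above by (intro wb_mp_word_ge[OF nsc MN(2) _ _ n_pos len])
  finally show ?thesis using Y(2) by simp
qed
end

theorem mainTheorem5:
  fixes n M N b :: nat
    and Cs :: "nat \<Rightarrow> ('a::{field,finite}) list set"
    and A :: "nat \<Rightarrow> nat \<Rightarrow> 'a"
  assumes codes: "\<forall>i\<in>{1..M}. lin_code n (Cs i)"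
    and nontriv: "\<forall>i\<in>{1..M}. \<exists>c\<in>Cs i. \<not> is_zero_vec c"
    and MN: "1 \<le> M" "M \<le> N"
    and ut: "upper_tri M N A"
    and nsc: "NSC M N A"
    and b: "1 \<le> b" "b \<le> n"
  shows
   "db b (mpc n M N Cs A) \<le> Min ({N * db b (Cs 1)} \<union> {(N - i + 1) * db b (Cs i) + b - 1 | i. 2 \<le> i \<and> i \<le> M})
    \<and> (Min {(N - i + 1) * db b (Cs i) | i. 1 \<le> i \<and> i \<le> M} = N * db b (Cs 1) \<longrightarrow>
         db b (mpc n M N Cs A) = Min {(N - i + 1) * db b (Cs i) | i. 1 \<le> i \<and> i \<le> M})
    \<and> (\<forall>i0. 2 \<le> i0 \<and> i0 \<le> M \<and>
          (N - i0 + 1) * db b (Cs i0) = Min {(N - i + 1) * db b (Cs i) | i. 1 \<le> i \<and> i \<le> M} \<longrightarrow>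
          (\<exists>c\<in>Cs i0. wb b c = db b (Cs i0) \<and>
             (\<exists>H\<in>holes n (chi 1 c). card H \<ge> b - 1 \<and> {1, n} \<inter> H \<noteq> {})) \<longrightarrow>
          db b (mpc n M N Cs A) = Min {(N - i + 1) * db b (Cs i) | i. 1 \<le> i \<and> i \<le> M})"
proof -
  interpret mp_code n M N b Cs A using assms by unfold_locales
  let ?d = "\<lambda>i. (N - i + 1) * db b (Cs i)"
  have "finite {?d i + b - 1 | i. 2 \<le> i \<and> i \<le> M}" by simp
  then have "db b (mpc n M N Cs A) \<le> Min ({N * db b (Cs 1)} \<union> {?d i + b - 1 | i. 2 \<le> i \<and> i \<le> M})"
    using db_mpc_le_first db_mpc_le_plus by (intro Min.boundedI) auto
  moreover have "db b (mpc n M N Cs A) = Min {?d i | i. 1 \<le> i \<and> i \<le> M}"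
    if "Min {?d i | i. 1 \<le> i \<and> i \<le> M} = N * db b (Cs 1)"
    using that db_mpc_le_first db_mpc_ge by simp
  moreover have "db b (mpc n M N Cs A) = Min {?d i | i. 1 \<le> i \<and> i \<le> M}"
    if "2 \<le> i0 \<and> i0 \<le> M \<and> ?d i0 = Min {?d i | i. 1 \<le> i \<and> i \<le> M}"
      and "\<exists>c\<in>Cs i0. wb b c = db b (Cs i0) \<and>
        (\<exists>H\<in>holes n (chi 1 c). card H \<ge> b - 1 \<and> {1, n} \<inter> H \<noteq> {})" for i0
    using that db_mpc_le_hole[of i0] db_mpc_ge by (auto intro: antisym)
  ultimately show ?thesis by blast
qed

end
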